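(* Let $K$ be a field with pairwise commuting derivations $\frac{d}{dx_1},\dots,\frac{d}{dx_k}$ and field of constants $C$. Then $$C(\partial_1,\dots,\partial_k)=\{x\in K(\partial_1,\dots,\partial_k)\mid x\partial_j=\partial_jx\ \text{for all }1\le j\le k\}.$$
   Context: $C=\{f\in K\mid \frac{d}{dx_i}f=0\ \forall i\}$. $K[\partial_1,\dots,\partial_k]$ is the ring of differential polynomials with usual addition and multiplication determined by $\partial_i\partial_j=\partial_j\partial_i$ and $\partial_ia=a\partial_i+\frac{d}{dx_i}(a)$ for $a\in K$; it satisfies the left Ore condition and $K(\partial_1,\dots,\partial_k)$ is its left division ring of fractions. $C(\partial_1,\dots,\partial_k)$ denotes the sub-division ring of $K(\partial_1,\dots,\partial_k)$ consisting of left fractions of elements of $C[\partial_1,\dots,\partial_k]$ (a commutative field, isomorphic to the rational function field over $C$ in $k$ variables). *)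

theory Defs
  imports Main
begin

definition derivation :: "('k::field \<Rightarrow> 'k) \<Rightarrow> bool" where
  "derivation \<delta> \<longleftrightarrow> (\<forall>a b. \<delta> (a + b) = \<delta> a + \<delta> b) \<and> (\<forall>a b. \<delta> (a * b) = a * \<delta> b + \<delta> a * b)"

definition constants :: "nat \<Rightarrow> (nat \<Rightarrow> 'k::field \<Rightarrow> 'k) \<Rightarrow> 'k set" where
  "constants k \<delta> = {a. \<forall>j<k. \<delta> j a = 0}"

text \<open>Coefficient families of differential polynomials: finitely supported functions on
  multi-indices alpha (with alpha j = 0 for j >= k).\<close>
definition msupp_ok :: "nat \<Rightarrow> ((nat \<Rightarrow> nat) \<Rightarrow> 'k::zero) \<Rightarrow> bool" where
  "msupp_ok k c \<longleftrightarrow> finite {\<alpha>. c \<alpha> \<noteq> 0} \<and> (\<forall>\<alpha>. c \<alpha> \<noteq> 0 \<longrightarrow> (\<forall>j\<ge>k. \<alpha> j = 0))"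

definition dmono :: "(nat \<Rightarrow> 'd::monoid_mult) \<Rightarrow> nat \<Rightarrow> (nat \<Rightarrow> nat) \<Rightarrow> 'd" where
  "dmono P k \<alpha> = foldr (\<lambda>j acc. P j ^ \<alpha> j * acc) [0..<k] 1"

definition dp_eval :: "('k::zero \<Rightarrow> 'd::ring_1) \<Rightarrow> (nat \<Rightarrow> 'd) \<Rightarrow> nat \<Rightarrow> ((nat \<Rightarrow> nat) \<Rightarrow> 'k) \<Rightarrow> 'd" where
  "dp_eval emb P k c = (\<Sum>\<alpha>\<in>{\<alpha>. c \<alpha> \<noteq> 0}. emb (c \<alpha>) * dmono P k \<alpha>)"

definition dpolys :: "('k::zero \<Rightarrow> 'd::ring_1) \<Rightarrow> (nat \<Rightarrow> 'd) \<Rightarrow> nat \<Rightarrow> 'k set \<Rightarrow> 'd set" where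
  "dpolys emb P k S = {dp_eval emb P k c | c. msupp_ok k c \<and> (\<forall>\<alpha>. c \<alpha> \<in> S)}"

definition left_fracs :: "'d::division_ring set \<Rightarrow> 'd set" where
  "left_fracs R = {inverse s * r | s r. s \<in> R \<and> r \<in> R \<and> s \<noteq> 0}"

text \<open>The division ring 'd (with embedding emb of K and elements P j playing the role of
  the partial derivatives) is the left division ring of fractions of K[d_1,...,d_k]:
  emb is a ring embedding, the P j commute, P j a = a P j + delta_j(a), the monomials are
  left K-linearly independent (so K[d] embeds), and every element is a left fraction.\<close>
definition diff_frac_ring ::
  "nat \<Rightarrow> (nat \<Rightarrow> 'k::field \<Rightarrow> 'k) \<Rightarrow> ('k \<Rightarrow> 'd::division_ring) \<Rightarrow> (nat \<Rightarrow> 'd) \<Rightarrow> bool" where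
  "diff_frac_ring k \<delta> emb P \<longleftrightarrow>
     (\<forall>a b. emb (a + b) = emb a + emb b) \<and> (\<forall>a b. emb (a * b) = emb a * emb b) \<and> emb 1 = 1 \<and>
     (\<forall>i<k. \<forall>j<k. P i * P j = P j * P i) \<and>
     (\<forall>i<k. \<forall>a. P i * emb a = emb a * P i + emb (\<delta> i a)) \<and>
     (\<forall>c. msupp_ok k c \<and> dp_eval emb P k c = 0 \<longrightarrow> (\<forall>\<alpha>. c \<alpha> = 0)) \<and>
     UNIV = left_fracs (dpolys emb P k UNIV)"

end

theory Submission
  imports Defs
begin

text \<open>
  A left fraction \<open>s\<^sup>-\<^sup>1 r\<close> of operators with constant coefficients commutes with every
  \<open>\<partial>\<^sub>j\<close>, because \<open>s\<close> and \<open>r\<close> do. Conversely, let \<open>x\<close> commute with all \<open>\<partial>\<^sub>j\<close> and consider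
  the nonzero \<open>s \<in> K[\<partial>]\<close> with \<open>s x \<in> K[\<partial>]\<close>. The commutator \<open>[\<partial>\<^sub>j, s]\<close> is \<open>s\<close> with its
  coefficients differentiated, and \<open>[\<partial>\<^sub>j, s] x = [\<partial>\<^sub>j, s x] \<in> K[\<partial>]\<close>. Normalising one
  coefficient of \<open>s\<close> to \<open>1\<close> and descending on the number of nonzero coefficients, we find
  such an \<open>s\<close> with constant coefficients. Then \<open>s x\<close> commutes with every \<open>\<partial>\<^sub>j\<close>, which by
  linear independence of the monomials forces its coefficients to be constant as well,
  and \<open>x = s\<^sup>-\<^sup>1 (s x)\<close>.
\<close>

lemma derivation_zero: "derivation \<delta> \<Longrightarrow> \<delta> 0 = 0"
  unfolding derivation_def by (metis add_cancel_right_right add_0)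

lemma derivation_one: "derivation \<delta> \<Longrightarrow> \<delta> 1 = 0"
  unfolding derivation_def by (metis add_cancel_right_right mult_1_left mult_1_right)

lemma msupp_ok_map:
  assumes "msupp_ok k c" "f 0 = 0"
  shows "msupp_ok k (\<lambda>\<alpha>. f (c \<alpha>))"
proof -
  have "{\<alpha>. f (c \<alpha>) \<noteq> 0} \<subseteq> {\<alpha>. c \<alpha> \<noteq> 0}" using assms(2) by auto
  then show ?thesis using assms(1) unfolding msupp_ok_def by (auto intro: finite_subset)
qed

lemma dp_eval_zero: "dp_eval emb P k (\<lambda>\<alpha>. 0) = 0"
  unfolding dp_eval_def by simp

lemma dp_eval_superset:
  assumes "emb 0 = 0" "finite S" "{\<alpha>. c \<alpha> \<noteq> 0} \<subseteq> S"
  shows "dp_eval emb P k c = (\<Sum>\<alpha>\<in>S. emb (c \<alpha>) * dmono P k \<alpha>)"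
  unfolding dp_eval_def by (rule sum.mono_neutral_left) (use assms in auto)

lemma foldr_power_prod_commute:
  fixes P :: "nat \<Rightarrow> 'd::monoid_mult"
  assumes "\<forall>j\<in>set xs. Q * P j = P j * Q"
  shows "Q * foldr (\<lambda>j acc. P j ^ \<alpha> j * acc) xs 1 = foldr (\<lambda>j acc. P j ^ \<alpha> j * acc) xs 1 * Q"
  using assms
proof (induction xs)
  case Nil
  then show ?case by simp
next
  case (Cons i xs)
  have "Q * P i ^ \<alpha> i = P i ^ \<alpha> i * Q"
    by (rule power_commuting_commutes[symmetric]) (use Cons.prems in simp)
  with Cons show ?case by (simp add: mult.assoc flip: mult.assoc[of Q])
qed

lemma dmono_commute:
  assumes "\<forall>j<k. Q * P j = P j * Q"
  shows "Q * dmono P k \<alpha> = dmono P k \<alpha> * Q"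
  unfolding dmono_def by (rule foldr_power_prod_commute) (use assms in auto)

lemma dp_eval_mult_left:
  fixes emb :: "'k::field \<Rightarrow> 'd::ring_1"
  assumes "emb 0 = 0" "\<forall>a b. emb (a * b) = emb a * emb b" "finite {\<alpha>. c \<alpha> \<noteq> 0}"
  shows "emb a * dp_eval emb P k c = dp_eval emb P k (\<lambda>\<alpha>. a * c \<alpha>)"
proof -
  have "dp_eval emb P k c = (\<Sum>\<alpha>\<in>{\<alpha>. c \<alpha> \<noteq> 0}. emb (c \<alpha>) * dmono P k \<alpha>)"
    and "dp_eval emb P k (\<lambda>\<alpha>. a * c \<alpha>) = (\<Sum>\<alpha>\<in>{\<alpha>. c \<alpha> \<noteq> 0}. emb (a * c \<alpha>) * dmono P k \<alpha>)"
    by (rule dp_eval_superset; use assms in auto)+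
  then show ?thesis using assms(2) by (simp add: sum_distrib_left mult.assoc)
qed

lemma dp_eval_commutator:
  fixes emb :: "'k::field \<Rightarrow> 'd::ring_1"
  assumes "emb 0 = 0" "\<delta> 0 = 0" "\<forall>j<k. Q * P j = P j * Q"
    and Q_emb: "\<forall>a. Q * emb a = emb a * Q + emb (\<delta> a)"
    and "finite {\<alpha>. c \<alpha> \<noteq> 0}"
  shows "Q * dp_eval emb P k c - dp_eval emb P k c * Q = dp_eval emb P k (\<lambda>\<alpha>. \<delta> (c \<alpha>))"
proof -
  have "dp_eval emb P k c = (\<Sum>\<alpha>\<in>{\<alpha>. c \<alpha> \<noteq> 0}. emb (c \<alpha>) * dmono P k \<alpha>)"
    and "dp_eval emb P k (\<lambda>\<alpha>. \<delta> (c \<alpha>)) = (\<Sum>\<alpha>\<in>{\<alpha>. c \<alpha> \<noteq> 0}. emb (\<delta> (c \<alpha>)) * dmono P k \<alpha>)"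
    by (rule dp_eval_superset; use assms in auto)+
  moreover have "Q * (emb a * dmono P k \<alpha>) - emb a * dmono P k \<alpha> * Q = emb (\<delta> a) * dmono P k \<alpha>"
    for a \<alpha>
    using Q_emb dmono_commute[OF assms(3), of \<alpha>]
    by (simp add: distrib_right mult.assoc flip: mult.assoc[of Q])
  ultimately show ?thesis
    by (simp add: sum_distrib_left sum_distrib_right flip: sum_subtractf)
qed

lemma card_support_derivative_less:
  fixes \<delta> :: "'k::field \<Rightarrow> 'k"
  assumes "\<delta> 0 = 0" "\<delta> 1 = 0" "c \<alpha>\<^sub>0 = 1" "finite {\<alpha>. c \<alpha> \<noteq> 0}"
  shows "card {\<alpha>. \<delta> (c \<alpha>) \<noteq> 0} < card {\<alpha>. c \<alpha> \<noteq> 0}"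
proof -
  have "card {\<alpha>. \<delta> (c \<alpha>) \<noteq> 0} \<le> card ({\<alpha>. c \<alpha> \<noteq> 0} - {\<alpha>\<^sub>0})"
    by (rule card_mono) (use assms in auto)
  also have "\<dots> < card {\<alpha>. c \<alpha> \<noteq> 0}"
    by (rule card_Diff1_less) (use assms in auto)
  finally show ?thesis .
qed

locale diff_fraction_ring =
  fixes k :: nat and \<delta> :: "nat \<Rightarrow> 'k::field \<Rightarrow> 'k"
    and emb :: "'k \<Rightarrow> 'd::division_ring" and P :: "nat \<Rightarrow> 'd"
  assumes derivations: "\<forall>j<k. derivation (\<delta> j)"
    and diff_frac_ring: "diff_frac_ring k \<delta> emb P"
begin

abbreviation dp :: "((nat \<Rightarrow> nat) \<Rightarrow> 'k) \<Rightarrow> 'd" where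
  "dp \<equiv> dp_eval emb P k"

abbreviation diff_polys :: "'d set" where
  "diff_polys \<equiv> dpolys emb P k UNIV"

abbreviation const_diff_polys :: "'d set" where
  "const_diff_polys \<equiv> dpolys emb P k (constants k \<delta>)"

lemma emb_zero: "emb 0 = 0"
  using diff_frac_ring unfolding diff_frac_ring_def by (metis add_cancel_right_right)

lemma emb_mult: "\<forall>a b. emb (a * b) = emb a * emb b"
  using diff_frac_ring unfolding diff_frac_ring_def by blast

lemma P_commute: "\<forall>i<k. P j * P i = P i * P j" if "j < k"
  using diff_frac_ring that unfolding diff_frac_ring_def by blast

lemma P_emb: "\<forall>a. P j * emb a = emb a * P j + emb (\<delta> j a)" if "j < k"
  using diff_frac_ring that unfolding diff_frac_ring_def by blast

lemma dp_eq_0_imp_coeff_eq_0: "msupp_ok k c \<Longrightarrow> dp c = 0 \<Longrightarrow> c \<alpha> = 0"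
  using diff_frac_ring unfolding diff_frac_ring_def by blast

lemma left_fracs_diff_polys: "x \<in> left_fracs diff_polys"
  using diff_frac_ring unfolding diff_frac_ring_def by blast

lemma delta_zero: "j < k \<Longrightarrow> \<delta> j 0 = 0"
  using derivations derivation_zero by blast

lemma delta_one: "j < k \<Longrightarrow> \<delta> j 1 = 0"
  using derivations derivation_one by blast

lemma finite_support: "msupp_ok k c \<Longrightarrow> finite {\<alpha>. c \<alpha> \<noteq> 0}"
  unfolding msupp_ok_def by blast

lemma dp_mem_diff_polys: "msupp_ok k c \<Longrightarrow> dp c \<in> diff_polys"
  unfolding dpolys_def by blast

lemma commutator_dp:
  assumes "j < k" "msupp_ok k c"
  shows "P j * dp c - dp c * P j = dp (\<lambda>\<alpha>. \<delta> j (c \<alpha>))"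
  using assms by (intro dp_eval_commutator emb_zero delta_zero P_commute P_emb finite_support)

lemma commutator_diff_polys:
  assumes "j < k" "q \<in> diff_polys"
  shows "P j * q - q * P j \<in> diff_polys"
proof -
  obtain c where "msupp_ok k c" "q = dp c"
    using assms(2) unfolding dpolys_def by blast
  with assms(1) show ?thesis
    using commutator_dp dp_mem_diff_polys msupp_ok_map[where f = "\<delta> j", OF _ delta_zero] by simp
qed

lemma dp_commute_iff:
  assumes "j < k" "msupp_ok k c"
  shows "P j * dp c = dp c * P j \<longleftrightarrow> (\<forall>\<alpha>. \<delta> j (c \<alpha>) = 0)"
proof -
  have "P j * dp c = dp c * P j \<longleftrightarrow> P j * dp c - dp c * P j = 0"
    by (rule right_minus_eq[symmetric])
  also have "\<dots> \<longleftrightarrow> dp (\<lambda>\<alpha>. \<delta> j (c \<alpha>)) = 0"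
    by (simp only: commutator_dp[OF assms])
  also have "\<dots> \<longleftrightarrow> (\<forall>\<alpha>. \<delta> j (c \<alpha>) = 0)"
    using dp_eq_0_imp_coeff_eq_0[OF msupp_ok_map[where f = "\<delta> j", OF assms(2) delta_zero[OF assms(1)]]]
    by (auto simp: dp_eval_zero)
  finally show ?thesis .
qed

lemma const_diff_polys_eq: "const_diff_polys = {q \<in> diff_polys. \<forall>j<k. P j * q = q * P j}"
proof (intro equalityI subsetI)
  fix q assume "q \<in> const_diff_polys"
  then obtain c where c: "msupp_ok k c" "\<forall>\<alpha>. c \<alpha> \<in> constants k \<delta>" "q = dp c"
    unfolding dpolys_def by blast
  have "\<forall>j<k. P j * q = q * P j"
    using c dp_commute_iff unfolding constants_def by simp
  moreover have "q \<in> diff_polys"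
    using c unfolding dpolys_def by blast
  ultimately show "q \<in> {q \<in> diff_polys. \<forall>j<k. P j * q = q * P j}"
    by blast
next
  fix q assume "q \<in> {q \<in> diff_polys. \<forall>j<k. P j * q = q * P j}"
  then obtain c where c: "msupp_ok k c" "q = dp c" "\<forall>j<k. P j * q = q * P j"
    unfolding dpolys_def by blast
  then have "\<forall>\<alpha>. c \<alpha> \<in> constants k \<delta>"
    unfolding constants_def using dp_commute_iff by simp
  with c show "q \<in> const_diff_polys"
    unfolding dpolys_def by blast
qed

lemma left_fracs_const_subset_centralizer:
  "left_fracs const_diff_polys \<subseteq> {x. \<forall>j<k. x * P j = P j * x}"
proof
  fix x assume "x \<in> left_fracs const_diff_polys"
  then obtain s r where x: "x = inverse s * r" and "s \<in> const_diff_polys" "r \<in> const_diff_polys"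
    unfolding left_fracs_def by blast
  then have commute: "inverse s * P j = P j * inverse s" "r * P j = P j * r" if "j < k" for j
    using that by (auto simp: const_diff_polys_eq intro: mult_commute_imp_mult_inverse_commute)
  have "inverse s * r * P j = P j * (inverse s * r)" if "j < k" for j
  proof -
    have "inverse s * r * P j = (inverse s * P j) * r"
      by (simp only: mult.assoc commute(2)[OF that])
    also have "\<dots> = P j * (inverse s * r)"
      by (simp only: commute(1)[OF that] mult.assoc)
    finally show ?thesis .
  qed
  then show "x \<in> {x. \<forall>j<k. x * P j = P j * x}"
    unfolding x by blast
qed

lemma denominator_scale:
  assumes "msupp_ok k c" "dp c * x \<in> diff_polys"
  shows "dp (\<lambda>\<alpha>. a * c \<alpha>) * x \<in> diff_polys"
proof -
  obtain d where d: "msupp_ok k d" "dp c * x = dp d"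
    using assms(2) unfolding dpolys_def by blast
  have "dp (\<lambda>\<alpha>. a * c \<alpha>) * x = emb a * dp c * x"
    by (simp only: dp_eval_mult_left[OF emb_zero emb_mult finite_support[OF assms(1)]])
  also have "\<dots> = emb a * dp d"
    by (simp only: mult.assoc d(2))
  also have "\<dots> = dp (\<lambda>\<alpha>. a * d \<alpha>)"
    by (rule dp_eval_mult_left[OF emb_zero emb_mult finite_support[OF d(1)]])
  finally show ?thesis
    using dp_mem_diff_polys[OF msupp_ok_map[where f = "\<lambda>b. a * b", OF d(1)]] by simp
qed

lemma denominator_derivative:
  assumes "j < k" "x * P j = P j * x" "msupp_ok k c" "dp c * x \<in> diff_polys"
  shows "dp (\<lambda>\<alpha>. \<delta> j (c \<alpha>)) * x \<in> diff_polys"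
proof -
  have "dp (\<lambda>\<alpha>. \<delta> j (c \<alpha>)) * x = (P j * dp c - dp c * P j) * x"
    by (simp only: commutator_dp[OF assms(1,3)])
  also have "\<dots> = P j * (dp c * x) - (dp c * x) * P j"
    using assms(2) by (simp add: left_diff_distrib mult.assoc)
  finally show ?thesis
    using commutator_diff_polys[OF assms(1,4)] by simp
qed

lemma ex_const_denominator:
  assumes "\<forall>j<k. x * P j = P j * x" "msupp_ok k c" "c \<alpha> \<noteq> 0" "dp c * x \<in> diff_polys"
  shows "\<exists>s \<in> const_diff_polys. s \<noteq> 0 \<and> s * x \<in> diff_polys"
  using assms(2-)
proof (induction "card {\<alpha>. c \<alpha> \<noteq> 0}" arbitrary: c \<alpha> rule: less_induct)
  case less
  define c' where "c' = (\<lambda>\<beta>. inverse (c \<alpha>) * c \<beta>)"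
  have ok': "msupp_ok k c'"
    unfolding c'_def by (rule msupp_ok_map[where f = "\<lambda>b. inverse (c \<alpha>) * b", OF less.prems(1)]) simp
  have one': "c' \<alpha> = 1" and support': "{\<beta>. c' \<beta> \<noteq> 0} = {\<beta>. c \<beta> \<noteq> 0}"
    using less.prems(2) by (simp_all add: c'_def)
  have denominator': "dp c' * x \<in> diff_polys"
    unfolding c'_def by (rule denominator_scale[OF less.prems(1,3)])
  show ?case
  proof (cases "\<forall>j<k. \<forall>\<beta>. \<delta> j (c' \<beta>) = 0")
    case True
    then have "dp c' \<in> const_diff_polys"
      using ok' unfolding dpolys_def constants_def by blast
    moreover have "dp c' \<noteq> 0"
      using dp_eq_0_imp_coeff_eq_0[OF ok'] one' by force
    ultimately show ?thesis
      using denominator' by blast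
  next
    case False
    then obtain j \<beta> where j: "j < k" and "\<delta> j (c' \<beta>) \<noteq> 0"
      by blast
    then show ?thesis
    proof (intro less.hyps)
      show "card {\<beta>. \<delta> j (c' \<beta>) \<noteq> 0} < card {\<beta>. c \<beta> \<noteq> 0}"
        using card_support_derivative_less[where \<delta> = "\<delta> j" and c = c', OF delta_zero[OF j] delta_one[OF j] one']
          finite_support[OF ok'] support' by simp
      show "msupp_ok k (\<lambda>\<beta>. \<delta> j (c' \<beta>))"
        using msupp_ok_map[where f = "\<delta> j", OF ok' delta_zero[OF j]] .
      show "dp (\<lambda>\<beta>. \<delta> j (c' \<beta>)) * x \<in> diff_polys"
        using denominator_derivative[OF j _ ok' denominator'] assms(1) j by blast
    qed
  qed
qed

lemma centralizer_subset_left_fracs_const: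
  "{x. \<forall>j<k. x * P j = P j * x} \<subseteq> left_fracs const_diff_polys"
proof
  fix x assume "x \<in> {x. \<forall>j<k. x * P j = P j * x}"
  then have x: "\<forall>j<k. x * P j = P j * x"
    by simp
  obtain s r where sr: "x = inverse s * r" "s \<in> diff_polys" "r \<in> diff_polys" "s \<noteq> 0"
    using left_fracs_diff_polys unfolding left_fracs_def by blast
  then obtain c where c: "msupp_ok k c" "s = dp c"
    unfolding dpolys_def by blast
  have "\<exists>\<alpha>. c \<alpha> \<noteq> 0"
  proof (rule ccontr)
    assume "\<nexists>\<alpha>. c \<alpha> \<noteq> 0"
    then have "c = (\<lambda>\<alpha>. 0)"
      by auto
    then show False
      using sr(4) c(2) by (simp add: dp_eval_zero)
  qed
  moreover have "dp c * x \<in> diff_polys"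
    using sr c(2) by (simp flip: mult.assoc)
  ultimately obtain s' where s': "s' \<in> const_diff_polys" "s' \<noteq> 0" "s' * x \<in> diff_polys"
    using ex_const_denominator[OF x c(1)] by blast
  have "P j * (s' * x) = s' * x * P j" if "j < k" for j
  proof -
    have "P j * s' = s' * P j"
      using s'(1) that by (simp add: const_diff_polys_eq)
    then show ?thesis
      using x that by (simp add: mult.assoc flip: mult.assoc[of "P j"])
  qed
  with s'(3) have "s' * x \<in> const_diff_polys"
    by (simp add: const_diff_polys_eq)
  moreover have "x = inverse s' * (s' * x)"
    using s'(2) by (simp flip: mult.assoc)
  ultimately show "x \<in> left_fracs const_diff_polys"
    using s' unfolding left_fracs_def by blast
qed

end

theorem mainTheorem18:
  fixes k :: nat and \<delta> :: "nat \<Rightarrow> 'k::field \<Rightarrow> 'k"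
    and emb :: "'k \<Rightarrow> 'd::division_ring" and P :: "nat \<Rightarrow> 'd"
  assumes "\<forall>j<k. derivation (\<delta> j)"
    and "\<forall>i<k. \<forall>j<k. \<forall>a. \<delta> i (\<delta> j a) = \<delta> j (\<delta> i a)"
    and "diff_frac_ring k \<delta> emb P"
  shows "left_fracs (dpolys emb P k (constants k \<delta>)) = {x. \<forall>j<k. x * P j = P j * x}"
proof -
  interpret diff_fraction_ring k \<delta> emb P
    using assms(1,3) by unfold_locales
  show ?thesis
    using left_fracs_const_subset_centralizer centralizer_subset_left_fracs_const
    by (rule equalityI)
qed

end
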